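(* Let $(P_t)_{t\in\mathbb{R}_+}$ be a stochastically monotone Feller semigroup on $\mathbb{R}$. For $t\ge0$, $n\ge2$ and $\mathbf{x}=(x_1,\dots,x_n)\in\overline{\mathbb{R}}^n$, let $Q^{(n)}_t(\mathbf{x},\cdot)$ be the law on $\overline{\mathbb{R}}^n$ of $(F^{[-1]}_{x_i,t}(U))_{1\le i\le n}$, where $U$ is uniform on $[0,1]$. Then for all $t\ge0$ and $n\ge2$, $Q^{(n)}_t$ is an order-preserving Markov kernel on $\overline{\mathbb{R}}^n$, and for all $t\ge0$, the family $(Q^{(n)}_t)_{n\ge1}$ with $Q^{(1)}_t=\tilde{P}_t$ is consistent.
   Context: $\overline{\mathbb{R}}=[-\infty,+\infty]$ with the metric $|\tanh y-\tanh x|$, and $\overline{\mathbb{R}}^n$ with the product topology. For $x\in\mathbb{R}$, $F^{[-1]}_{x,t}(u)=\inf\{y\in\mathbb{R}:P_t(x,(-\infty,y])\ge u\}$, and $F^{[-1]}_{\pm\infty,t}\equiv\pm\infty$. $\tilde{P}_t(x,B)=P_t(x,B\cap\mathbb{R})$ for $x\in\mathbb{R}$, $\tilde{P}_t(\pm\infty,\cdot)=\delta_{\pm\infty}$. A kernel $K$ on $\overline{\mathbb{R}}^n$ is order-preserving if for all $\mathbf{x}$, $K(\mathbf{x},\cdot)$-a.s. $\mathbf{y}$ satisfies $x_i\le x_j\Rightarrow y_i\le y_j$ for all $i,j$. A family $(K^{(n)})_{n\ge1}$ of kernels on the powers $S^n$ is consistent if $K^{(n)}(\mathbf{x},(\pi^n_{i_1,\dots,i_k})^{-1}(B))=K^{(k)}(\pi^n_{i_1,\dots,i_k}(\mathbf{x}),B)$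 for all $1\le k\le n$, $i_1,\dots,i_k\in\{1,\dots,n\}$ (repetitions allowed), $\mathbf{x}\in S^n$, measurable $B\subset S^k$, where $\pi^n_{i_1,\dots,i_k}(\mathbf{x})=(x_{i_1},\dots,x_{i_k})$. Feller and stochastically monotone are as usual: $P_t$ maps $\mathcal{C}_0(\mathbb{R})$ into itself with $\sup|P_tf-f|\to0$ as $t\to 0^+$, and $P_t$ maps bounded non-decreasing functions to non-decreasing functions. *)

theory Defs
  imports "HOL-Probability.Probability"
begin

text \<open>A transition semigroup on the reals is given as P :: real => real => real measure,
  P t x being the law P_t(x, .) on the Borel sets of the reals (used for t >= 0).\<close>

definition semigroup_op :: "(real \<Rightarrow> real \<Rightarrow> real measure) \<Rightarrow> real \<Rightarrow> (real \<Rightarrow> real) \<Rightarrow> real \<Rightarrow> real" where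
  "semigroup_op P t f x = (\<integral>y. f y \<partial>(P t x))"

definition C0 :: "(real \<Rightarrow> real) set" where
  "C0 = {f. continuous_on UNIV f \<and> (f \<longlongrightarrow> 0) at_infinity}"

definition markov_semigroup :: "(real \<Rightarrow> real \<Rightarrow> real measure) \<Rightarrow> bool" where
  "markov_semigroup P \<longleftrightarrow>
     (\<forall>t\<ge>0. P t \<in> borel \<rightarrow>\<^sub>M prob_algebra borel) \<and>
     (\<forall>x. P 0 x = return borel x) \<and>
     (\<forall>s\<ge>0. \<forall>t\<ge>0. \<forall>x. P (s + t) x = bind (P s x) (P t))"

definition feller :: "(real \<Rightarrow> real \<Rightarrow> real measure) \<Rightarrow> bool" where
  "feller P \<longleftrightarrow>
     (\<forall>f\<in>C0. (\<forall>t\<ge>0. semigroup_op P t f \<in> C0) \<and>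
        uniform_limit UNIV (\<lambda>t. semigroup_op P t f) f (at_right 0))"

definition stochastically_monotone :: "(real \<Rightarrow> real \<Rightarrow> real measure) \<Rightarrow> bool" where
  "stochastically_monotone P \<longleftrightarrow>
     (\<forall>t\<ge>0. \<forall>f::real \<Rightarrow> real. bounded (range f) \<and> mono f \<longrightarrow> mono (semigroup_op P t f))"

definition Finv :: "(real \<Rightarrow> real \<Rightarrow> real measure) \<Rightarrow> real \<Rightarrow> ereal \<Rightarrow> real \<Rightarrow> ereal" where
  "Finv P t x u = (case x of
      ereal r \<Rightarrow> Inf (ereal ` {y::real. measure (P t r) {..y} \<ge> u})
    | PInfty \<Rightarrow> \<infinity>
    | MInfty \<Rightarrow> -\<infinity>)"

abbreviation ERn :: "nat \<Rightarrow> (nat \<Rightarrow> ereal) measure" where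
  "ERn n \<equiv> PiM {..<n} (\<lambda>_. (borel :: ereal measure))"

definition unif01 :: "real measure" where
  "unif01 = uniform_measure lborel {0..1}"

definition Qn :: "(real \<Rightarrow> real \<Rightarrow> real measure) \<Rightarrow> nat \<Rightarrow> real \<Rightarrow> (nat \<Rightarrow> ereal) \<Rightarrow> (nat \<Rightarrow> ereal) measure" where
  "Qn P n t x = distr unif01 (ERn n) (\<lambda>u. \<lambda>i\<in>{..<n}. Finv P t (x i) u)"

definition Ptilde :: "(real \<Rightarrow> real \<Rightarrow> real measure) \<Rightarrow> real \<Rightarrow> ereal \<Rightarrow> ereal measure" where
  "Ptilde P t x = (case x of
      ereal r \<Rightarrow> distr (P t r) borel ereal
    | PInfty \<Rightarrow> return borel \<infinity>
    | MInfty \<Rightarrow> return borel (-\<infinity>))"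

text \<open>The family with Q^{(1)}_t = tilde P_t (S^1 identified with S via x |-> x 0)
  and Q^{(n)}_t for n >= 2.\<close>
definition Kfam :: "(real \<Rightarrow> real \<Rightarrow> real measure) \<Rightarrow> nat \<Rightarrow> real \<Rightarrow> (nat \<Rightarrow> ereal) \<Rightarrow> (nat \<Rightarrow> ereal) measure" where
  "Kfam P n t x = (if n = 1 then distr (Ptilde P t (x 0)) (ERn 1) (\<lambda>y. \<lambda>i\<in>{..<1}. y)
                   else Qn P n t x)"

definition markov_kernel_on :: "'a measure \<Rightarrow> ('a \<Rightarrow> 'a measure) \<Rightarrow> bool" where
  "markov_kernel_on M K \<longleftrightarrow> K \<in> M \<rightarrow>\<^sub>M prob_algebra M"

definition order_preserving :: "nat \<Rightarrow> ((nat \<Rightarrow> ereal) \<Rightarrow> (nat \<Rightarrow> ereal) measure) \<Rightarrow> bool" where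
  "order_preserving n K \<longleftrightarrow>
     (\<forall>x\<in>space (ERn n). AE y in K x. \<forall>i<n. \<forall>j<n. x i \<le> x j \<longrightarrow> y i \<le> y j)"

definition consistent_family :: "(nat \<Rightarrow> (nat \<Rightarrow> ereal) \<Rightarrow> (nat \<Rightarrow> ereal) measure) \<Rightarrow> bool" where
  "consistent_family K \<longleftrightarrow>
     (\<forall>n k (idx::nat \<Rightarrow> nat) x B. 1 \<le> k \<and> k \<le> n \<and> (\<forall>j<k. idx j < n) \<and>
        x \<in> space (ERn n) \<and> B \<in> sets (ERn k) \<longrightarrow>
        emeasure (K n x) {y\<in>space (ERn n). (\<lambda>j\<in>{..<k}. y (idx j)) \<in> B}
          = emeasure (K k (\<lambda>j\<in>{..<k}. x (idx j))) B)"

end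

theory Submission
  imports Defs
begin

(* With U uniform on (0,1), the quantile transform F^{[-1]}_{x,t}(U) has law P_t(x,.), so all the
   Q^{(n)}_t are built on one probability space, jointly measurably in the starting point.
   Stochastic monotonicity makes the distribution function of P_t(x,.) decrease in x, hence the
   quantile increase in x, pointwise in U: order preservation holds surely. Projecting the quantile
   vector of x onto coordinates idx_1 .. idx_k gives the quantile vector of the projected point,
   which is consistency; for n = 1 the law is tilde P_t. *)

lemma sets_unif01 [simp, measurable_cong]: "sets unif01 = sets borel"
  by (simp add: unif01_def)

lemma space_unif01 [simp]: "space unif01 = UNIV"
  by (simp add: unif01_def)

lemma prob_space_unif01: "prob_space unif01"
  unfolding unif01_def by (rule prob_space_uniform_measure) auto

lemma unif01_eq_distr_restrict: "unif01 = distr (restrict_space lborel {0<..<1}) borel (\<lambda>u. u)"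
proof (rule measure_eqI)
  fix A :: "real set" assume "A \<in> sets unif01"
  then have A: "A \<in> sets borel" by simp
  have "emeasure unif01 A = emeasure lborel ({0..1} \<inter> A)"
    using A by (simp add: unif01_def emeasure_uniform_measure divide_ennreal_def)
  also have "\<dots> = emeasure lborel ({0<..<1} \<inter> A)"
  proof (rule emeasure_eq_AE)
    show "AE u in lborel. u \<in> {0..1} \<inter> A \<longleftrightarrow> u \<in> {0<..<1} \<inter> A"
      using AE_lborel_singleton[of 0] AE_lborel_singleton[of 1] by eventually_elim auto
  qed (use A in auto)
  also have "\<dots> = emeasure (distr (restrict_space lborel {0<..<1}) borel (\<lambda>u. u)) A"
    using A by (subst emeasure_distr)
      (auto simp: space_restrict_space emeasure_restrict_space Int_commute intro: measurable_restrict_space1)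
  finally show "emeasure unif01 A = emeasure (distr (restrict_space lborel {0<..<1}) borel (\<lambda>u. u)) A" .
qed (simp only: sets_unif01 sets_distr)

(* The infimum is taken in the extended reals: it is -\<infinity> for u \<le> 0 and \<infinity> if no level reaches u. *)
definition ereal_quantile :: "real measure \<Rightarrow> real \<Rightarrow> ereal" where
  "ereal_quantile M u = Inf (ereal ` {y. u \<le> measure M {..y}})"

lemma (in real_distribution) ereal_quantile_le_iff:
  "ereal_quantile M u \<le> ereal a \<longleftrightarrow> u \<le> measure M {..a}"
proof
  assume "u \<le> measure M {..a}"
  then show "ereal_quantile M u \<le> ereal a"
    unfolding ereal_quantile_def by (intro Inf_lower) simp
next
  assume le: "ereal_quantile M u \<le> ereal a"
  have "u \<le> cdf M b" if "a < b" for b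
  proof -
    have "Inf (ereal ` {y. u \<le> measure M {..y}}) < ereal b"
      using le that unfolding ereal_quantile_def by (simp add: le_less_trans)
    then obtain y where "u \<le> cdf M y" "y < b"
      by (auto simp: Inf_less_iff cdf_def)
    then show ?thesis
      using cdf_nondecreasing[of y b] by simp
  qed
  then have "\<forall>\<^sub>F b in at_right a. u \<le> cdf M b"
    using eventually_at_right_less[of a] by (rule eventually_mono[rotated]) simp
  moreover have "(cdf M \<longlongrightarrow> cdf M a) (at_right a)"
    using cdf_is_right_cont[of a] by (simp add: continuous_within)
  ultimately have "u \<le> cdf M a"
    by (intro tendsto_lowerbound[of "cdf M" _ "at_right a"]) simp_all
  then show "u \<le> measure M {..a}"
    by (simp add: cdf_def)
qed

(* I is the real quantile function of Skorohod's construction in HOL-Probability.Weak_Convergence. *)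
lemma (in cdf_distribution) ereal_quantile_eq_I:
  assumes "0 < u" "u < 1"
  shows "ereal_quantile M u = ereal (I u)"
proof -
  have "{y. u \<le> measure M {..y}} = {y. u \<le> cdf M y}"
    by (simp add: cdf_def2)
  also have "\<dots> = {I u..}"
    using pseudoinverse[OF assms] by blast
  finally have "{y. u \<le> measure M {..y}} = {I u..}" .
  then have "ereal_quantile M u = Inf (ereal ` {I u..})"
    by (simp add: ereal_quantile_def)
  also have "\<dots> = ereal (I u)"
  proof (rule antisym)
    show "Inf (ereal ` {I u..}) \<le> ereal (I u)"
      by (rule Inf_lower) simp
    show "ereal (I u) \<le> Inf (ereal ` {I u..})"
      by (rule Inf_greatest) auto
  qed
  finally show ?thesis .
qed

lemma ereal_quantile_antimono:
  assumes "\<And>y. measure N {..y} \<le> measure M {..y}"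
  shows "ereal_quantile M u \<le> ereal_quantile N u"
  unfolding ereal_quantile_def
  using assms by (intro Inf_superset_mono image_mono) (auto intro: order_trans[OF _ assms])

lemma ereal_le_MInfty_iff: "(x::ereal) \<le> -\<infinity> \<longleftrightarrow> (\<forall>m::nat. x \<le> - ereal (real m))"
proof (cases x)
  case (real r)
  obtain m :: nat where "- r < real m"
    using reals_Archimedean2 by blast
  then have "\<not> x \<le> - ereal (real m)"
    using real by simp
  moreover have "\<not> x \<le> -\<infinity>"
    using real by simp
  ultimately show ?thesis
    by blast
qed simp_all

lemma real_distribution_kernel:
  assumes "K \<in> N \<rightarrow>\<^sub>M prob_algebra borel" and "y \<in> space N"
  shows "real_distribution (K y)"
  using measurable_space[OF assms]
  by (auto simp: space_prob_algebra real_distribution_def real_distribution_axioms_def)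

lemma borel_measurable_ereal_quantile:
  assumes K: "K \<in> N \<rightarrow>\<^sub>M prob_algebra borel" and f: "f \<in> M \<rightarrow>\<^sub>M N" and g: "g \<in> borel_measurable M"
  shows "(\<lambda>x. ereal_quantile (K (f x)) (g x)) \<in> borel_measurable M"
proof -
  have le_iff: "ereal_quantile (K (f x)) (g x) \<le> ereal a \<longleftrightarrow> g x \<le> measure (K (f x)) {..a}"
    if "x \<in> space M" for x a
    using real_distribution_kernel[OF K measurable_space[OF f that]]
    by (rule real_distribution.ereal_quantile_le_iff)
  have cdf_meas: "(\<lambda>x. measure (K (f x)) {..a}) \<in> borel_measurable M" for a
    using measurable_compose[OF f measurable_compose[OF K measurable_measure_prob_algebra]] by simp
  have "{x \<in> space M. ereal_quantile (K (f x)) (g x) \<le> c} \<in> sets M" for c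
  proof (cases c)
    case (real a)
    then have "{x \<in> space M. ereal_quantile (K (f x)) (g x) \<le> c}
        = {x \<in> space M. g x \<le> measure (K (f x)) {..a}}"
      using le_iff by auto
    also have "\<dots> \<in> sets M"
      by (intro borel_measurable_le g cdf_meas)
    finally show ?thesis .
  next
    case MInf
    then have "{x \<in> space M. ereal_quantile (K (f x)) (g x) \<le> c}
        = {x \<in> space M. \<forall>m::nat. g x \<le> measure (K (f x)) {..- real m}}"
      unfolding MInf ereal_le_MInfty_iff uminus_ereal.simps using le_iff by auto
    also have "\<dots> \<in> sets M"
      by (intro sets.sets_Collect_countable_All borel_measurable_le g cdf_meas)
    finally show ?thesis .
  next
    case PInf
    then have "{x \<in> space M. ereal_quantile (K (f x)) (g x) \<le> c} = space M"
      by auto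
    then show ?thesis
      by (simp only: sets.top)
  qed
  then show ?thesis
    by (rule borel_measurableI_le)
qed

lemma (in real_distribution) distr_unif01_ereal_quantile:
  "distr unif01 borel (ereal_quantile M) = distr M borel ereal"
proof -
  interpret cdf_distribution M ..
  let ?\<Omega> = "restrict_space lborel {0<..<1::real}"
  have quantile_meas: "(\<lambda>u. ereal_quantile M u) \<in> borel_measurable borel"
    by (rule borel_measurable_ereal_quantile[of "\<lambda>_. M" borel "\<lambda>u. u"])
      (auto intro: measurable_const simp: space_prob_algebra prob_space_axioms)
  have I_meas: "I \<in> ?\<Omega> \<rightarrow>\<^sub>M borel"
    using measurable_CI by (simp only: measurable_cong_sets[OF sets_restrict_space_cong[OF sets_lborel] refl])
  have ereal_meas: "ereal \<in> borel \<rightarrow>\<^sub>M (borel :: ereal measure)"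
    using borel_measurable_ereal[OF measurable_ident_sets[OF refl]] by simp
  have quantile_eq_I: "ereal_quantile M u = ereal (I u)" if "u \<in> space ?\<Omega>" for u
    using that by (intro ereal_quantile_eq_I) (simp_all add: space_restrict_space)
  have "distr unif01 borel (ereal_quantile M) = distr ?\<Omega> borel (ereal_quantile M)"
    using quantile_meas unfolding unif01_eq_distr_restrict
    by (subst distr_distr) (auto simp: comp_def intro: measurable_restrict_space1)
  also have "\<dots> = distr ?\<Omega> borel (ereal \<circ> I)"
    using quantile_eq_I by (intro distr_cong) auto
  also have "\<dots> = distr (distr ?\<Omega> borel I) borel ereal"
    by (rule distr_distr[symmetric, OF ereal_meas I_meas])
  also have "\<dots> = distr M borel ereal"
    by (simp add: distr_I_eq_M)
  finally show ?thesis .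
qed

lemma measurable_PiM_reindex:
  assumes "\<forall>j<k. idx j < n"
  shows "(\<lambda>y. \<lambda>j\<in>{..<k}. y (idx j)) \<in> PiM {..<n} (\<lambda>_. M) \<rightarrow>\<^sub>M PiM {..<k} (\<lambda>_. M)"
  using assms by (intro measurable_restrict measurable_component_singleton) auto

lemma Finv_ereal: "Finv P t (ereal r) = ereal_quantile (P t r)"
  by (simp add: Finv_def ereal_quantile_def fun_eq_iff)

context
  fixes P :: "real \<Rightarrow> real \<Rightarrow> real measure" and t :: real
  assumes P_t: "P t \<in> borel \<rightarrow>\<^sub>M prob_algebra borel"
begin

lemma real_distribution_P: "real_distribution (P t r)"
  using real_distribution_kernel[OF P_t] by simp

lemma measurable_Finv [measurable]:
  assumes f: "f \<in> borel_measurable M" and g: "g \<in> borel_measurable M"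
  shows "(\<lambda>x. Finv P t (f x) (g x)) \<in> borel_measurable M"
proof -
  have Finv_eq: "(\<lambda>x. Finv P t (f x) (g x)) = (\<lambda>x. if f x = \<infinity> then \<infinity> else if f x = -\<infinity> then -\<infinity>
          else ereal_quantile (P t (real_of_ereal (f x))) (g x))"
    by (auto simp: fun_eq_iff Finv_def ereal_quantile_def split: ereal.split)
  have quantile: "(\<lambda>x. ereal_quantile (P t (real_of_ereal (f x))) (g x)) \<in> borel_measurable M"
    by (rule borel_measurable_ereal_quantile[OF P_t _ g]) (use f in measurable)
  have level_sets: "{x \<in> space M. f x = c} \<in> sets M" for c
    using f borel_measurable_const by (rule measurable_equality_set)
  show ?thesis
    unfolding Finv_eq by (intro measurable_If borel_measurable_const quantile level_sets)
qed

lemma distr_unif01_Finv: "distr unif01 borel (Finv P t z) = Ptilde P t z"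
proof (cases z)
  case (real r)
  then show ?thesis
    using real_distribution.distr_unif01_ereal_quantile[OF real_distribution_P]
    by (simp add: Finv_ereal Ptilde_def)
next
  case PInf
  then have "Finv P t z = (\<lambda>_. \<infinity>)"
    by (simp add: Finv_def fun_eq_iff)
  then show ?thesis
    using PInf by (simp add: Ptilde_def prob_space.distr_const[OF prob_space_unif01])
next
  case MInf
  then have "Finv P t z = (\<lambda>_. -\<infinity>)"
    by (simp add: Finv_def fun_eq_iff)
  then show ?thesis
    using MInf by (simp add: Ptilde_def prob_space.distr_const[OF prob_space_unif01])
qed

lemma stochastically_monotone_cdf_antimono:
  assumes sm: "stochastically_monotone P" and t: "t \<ge> 0" and "r \<le> s"
  shows "measure (P t s) {..y} \<le> measure (P t r) {..y}"
proof -
  let ?f = "\<lambda>x. - indicator {..y} x :: real"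
  have "mono ?f"
    by (auto intro!: monoI simp: indicator_def)
  moreover have "bounded (range ?f)"
    by (rule boundedI[of _ 1]) (auto simp: indicator_def)
  ultimately have "mono (semigroup_op P t ?f)"
    using sm t unfolding stochastically_monotone_def by blast
  then have "semigroup_op P t ?f r \<le> semigroup_op P t ?f s"
    using \<open>r \<le> s\<close> by (rule monoD)
  then show ?thesis
    by (simp add: semigroup_op_def real_distribution.space_eq_univ[OF real_distribution_P])
qed

lemma Finv_mono:
  assumes sm: "stochastically_monotone P" and t: "t \<ge> 0" and "z \<le> z'"
  shows "Finv P t z u \<le> Finv P t z' u"
proof (cases z; cases z')
  fix r s assume "z = ereal r" "z' = ereal s"
  with \<open>z \<le> z'\<close> have "r \<le> s"
    by simp
  then show ?thesis
    unfolding \<open>z = ereal r\<close> \<open>z' = ereal s\<close> Finv_ereal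
    by (intro ereal_quantile_antimono stochastically_monotone_cdf_antimono[OF sm t])
qed (use \<open>z \<le> z'\<close> in \<open>auto simp: Finv_def\<close>)

lemma measurable_Qn: "Qn P n t \<in> ERn n \<rightarrow>\<^sub>M prob_algebra (ERn n)"
proof -
  have "(\<lambda>_. unif01) \<in> ERn n \<rightarrow>\<^sub>M prob_algebra borel"
    by (rule measurable_const) (simp add: space_prob_algebra prob_space_unif01)
  moreover have "(\<lambda>(x, u). \<lambda>i\<in>{..<n}. Finv P t (x i) u) \<in> ERn n \<Otimes>\<^sub>M borel \<rightarrow>\<^sub>M ERn n"
    by measurable
  ultimately show ?thesis
    unfolding Qn_def[abs_def] by (rule measurable_distr_prob_space2)
qed

lemma Qn_order_preserving:
  assumes sm: "stochastically_monotone P" and t: "t \<ge> 0"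
  shows "AE y in Qn P n t x. \<forall>i<n. \<forall>j<n. x i \<le> x j \<longrightarrow> y i \<le> y j"
  unfolding Qn_def
proof (subst AE_distr_iff)
  show "(\<lambda>u. \<lambda>i\<in>{..<n}. Finv P t (x i) u) \<in> unif01 \<rightarrow>\<^sub>M ERn n"
    by measurable
  have "{y \<in> space (ERn n). y i \<le> y j} \<in> sets (ERn n)" if "i < n" "j < n" for i j
    using that by (intro borel_measurable_le measurable_component_singleton) simp_all
  then show "{y \<in> space (ERn n). \<forall>i<n. \<forall>j<n. x i \<le> x j \<longrightarrow> y i \<le> y j} \<in> sets (ERn n)"
    unfolding pred_def[symmetric] by (intro pred_intros_countable(1) pred_intros_imp') (simp add: pred_def)
  show "AE u in unif01. \<forall>i<n. \<forall>j<n. x i \<le> x j \<longrightarrow>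
      (\<lambda>i\<in>{..<n}. Finv P t (x i) u) i \<le> (\<lambda>i\<in>{..<n}. Finv P t (x i) u) j"
    by (intro AE_I2) (simp add: Finv_mono[OF sm t])
qed

lemma distr_Qn_reindex:
  assumes idx: "\<forall>j<k. idx j < n"
  shows "distr (Qn P n t x) (ERn k) (\<lambda>y. \<lambda>j\<in>{..<k}. y (idx j)) = Qn P k t (\<lambda>j\<in>{..<k}. x (idx j))"
proof -
  have "(\<lambda>y. \<lambda>j\<in>{..<k}. y (idx j)) \<in> ERn n \<rightarrow>\<^sub>M ERn k"
    using idx by (rule measurable_PiM_reindex)
  moreover have "(\<lambda>u. \<lambda>i\<in>{..<n}. Finv P t (x i) u) \<in> unif01 \<rightarrow>\<^sub>M ERn n"
    by measurable
  ultimately have "distr (Qn P n t x) (ERn k) (\<lambda>y. \<lambda>j\<in>{..<k}. y (idx j))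
      = distr unif01 (ERn k) ((\<lambda>y. \<lambda>j\<in>{..<k}. y (idx j)) \<circ> (\<lambda>u. \<lambda>i\<in>{..<n}. Finv P t (x i) u))"
    unfolding Qn_def by (rule distr_distr)
  also have "(\<lambda>y. \<lambda>j\<in>{..<k}. y (idx j)) \<circ> (\<lambda>u. \<lambda>i\<in>{..<n}. Finv P t (x i) u)
      = (\<lambda>u. \<lambda>j\<in>{..<k}. Finv P t ((\<lambda>j\<in>{..<k}. x (idx j)) j) u)"
    using idx by (auto simp: fun_eq_iff)
  finally show ?thesis
    unfolding Qn_def .
qed

lemma consistent_family_Qn: "consistent_family (\<lambda>n. Qn P n t)"
  unfolding consistent_family_def
proof (intro allI impI, elim conjE)
  fix n k :: nat and idx :: "nat \<Rightarrow> nat" and x and B :: "(nat \<Rightarrow> ereal) set"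
  assume idx: "\<forall>j<k. idx j < n" and B: "B \<in> sets (ERn k)"
  let ?proj = "\<lambda>y. \<lambda>j\<in>{..<k}. y (idx j)"
  have "?proj \<in> Qn P n t x \<rightarrow>\<^sub>M ERn k"
    using measurable_PiM_reindex[OF idx] by (simp add: Qn_def)
  then have "emeasure (Qn P k t (\<lambda>j\<in>{..<k}. x (idx j))) B
      = emeasure (Qn P n t x) (?proj -` B \<inter> space (Qn P n t x))"
    using B by (simp add: emeasure_distr flip: distr_Qn_reindex[OF idx])
  also have "?proj -` B \<inter> space (Qn P n t x) = {y \<in> space (ERn n). ?proj y \<in> B}"
    by (auto simp: Qn_def)
  finally show "emeasure (Qn P n t x) {y \<in> space (ERn n). ?proj y \<in> B}
      = emeasure (Qn P k t (\<lambda>j\<in>{..<k}. x (idx j))) B"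
    by (rule sym)
qed

lemma Kfam_eq_Qn: "Kfam P n t = Qn P n t"
proof (rule ext)
  fix x
  show "Kfam P n t x = Qn P n t x"
  proof (cases "n = 1")
    case True
    have "(\<lambda>y. \<lambda>i\<in>{..<1::nat}. y) \<in> (borel :: ereal measure) \<rightarrow>\<^sub>M ERn 1"
      by measurable
    moreover have "Finv P t (x 0) \<in> unif01 \<rightarrow>\<^sub>M borel"
      by measurable
    moreover have "Kfam P n t x = distr (Ptilde P t (x 0)) (ERn 1) (\<lambda>y. \<lambda>i\<in>{..<1}. y)"
      by (simp add: Kfam_def True)
    ultimately have "Kfam P n t x = distr unif01 (ERn 1) ((\<lambda>y. \<lambda>i\<in>{..<1}. y) \<circ> Finv P t (x 0))"
      unfolding distr_unif01_Finv[symmetric] by (simp add: distr_distr)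
    also have "(\<lambda>y. \<lambda>i\<in>{..<1::nat}. y) \<circ> Finv P t (x 0) = (\<lambda>u. \<lambda>i\<in>{..<1}. Finv P t (x i) u)"
      by (auto simp: fun_eq_iff)
    also have "distr unif01 (ERn 1) (\<lambda>u. \<lambda>i\<in>{..<1}. Finv P t (x i) u) = Qn P n t x"
      by (simp add: Qn_def True)
    finally show ?thesis .
  qed (simp add: Kfam_def)
qed

end

theorem proposition3p2:
  fixes P :: "real \<Rightarrow> real \<Rightarrow> real measure"
  assumes "markov_semigroup P" and "feller P" and "stochastically_monotone P"
  shows "(\<forall>t\<ge>0. \<forall>n\<ge>2. markov_kernel_on (ERn n) (Qn P n t) \<and> order_preserving n (Qn P n t))
       \<and> (\<forall>t\<ge>0. consistent_family (\<lambda>n. Kfam P n t))"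
proof -
  have P_t: "P t \<in> borel \<rightarrow>\<^sub>M prob_algebra borel" if "t \<ge> 0" for t
    using assms(1) that by (simp add: markov_semigroup_def)
  show ?thesis
    unfolding markov_kernel_on_def order_preserving_def
    using measurable_Qn[OF P_t] Qn_order_preserving[OF P_t assms(3)]
      consistent_family_Qn[OF P_t] Kfam_eq_Qn[OF P_t]
    by simp
qed

end
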